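(* Let $k\geq 2$, $d\geq 2$, let $v_1,\dots,v_k\in\mathbb{R}^d$ be nonzero vectors and $\gamma_1,\dots,\gamma_k>0$ with $\sum_{i=1}^k\gamma_i v_i=0$. Then there exists a bi-partitioning $c_1\dot\cup c_2=\{1,\dots,k\}$ into nonempty sets such that $$\max_{i\in c_1,j\in c_2}\alpha(v_i,v_j)\leq\cos\Big(\frac{\pi}{k-1}\Big).$$
   Context: For nonzero $a,b\in\mathbb{R}^d$, the cosine similarity is $\alpha(a,b)=\frac{\langle a,b\rangle}{\|a\|\|b\|}$. *)

theory Defs
  imports "HOL-Analysis.Analysis"
begin

definition cos_sim :: "'a::real_inner \<Rightarrow> 'a \<Rightarrow> real" where
  "cos_sim a b = inner a b / (norm a * norm b)"

end

theory Submission
  imports Defs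
begin

text \<open>Suppose every bipartition has a cross pair at angle less than \<open>\<delta> = \<pi>/(k-1)\<close>. Then the
  graph on the normalised vectors joining pairs at angle less than \<open>\<delta>\<close> is connected. Growing a
  spherical cap along this graph costs only half an edge length per new vertex, because the
  centre can be moved halfway towards the new vertex; so all \<open>k\<close> vectors fit into a cap of
  radius less than \<open>(k-1)\<delta>/2 = \<pi>/2\<close>. Its centre \<open>w\<close> has positive inner product with every
  \<open>v\<^sub>i\<close>, which contradicts \<open>\<Sum> \<gamma>\<^sub>i v\<^sub>i = 0\<close>.\<close>

text \<open>Great-circle distance; meaningful on unit vectors only.\<close>
definition sphere_dist :: "'a::real_inner \<Rightarrow> 'a \<Rightarrow> real" where
  "sphere_dist a b = arccos (inner a b)"

lemma inner_unit_bounded: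
  fixes a b :: "'a::real_inner"
  assumes "norm a = 1" "norm b = 1"
  shows "-1 \<le> inner a b" "inner a b \<le> 1"
  using Cauchy_Schwarz_ineq2[of a b] assms by auto

lemma sphere_dist_bounded:
  fixes a b :: "'a::real_inner"
  assumes "norm a = 1" "norm b = 1"
  shows "0 \<le> sphere_dist a b" "sphere_dist a b \<le> pi"
  using arccos_bounded[OF inner_unit_bounded[OF assms]] by (auto simp: sphere_dist_def)

lemma cos_sphere_dist:
  fixes a b :: "'a::real_inner"
  assumes "norm a = 1" "norm b = 1"
  shows "cos (sphere_dist a b) = inner a b"
  using inner_unit_bounded[OF assms] by (simp add: sphere_dist_def)

lemma sphere_dist_self:
  fixes a :: "'a::real_inner"
  assumes "norm a = 1"
  shows "sphere_dist a a = 0"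
  using assms by (simp add: sphere_dist_def dot_square_norm)

lemma sphere_dist_less_iff:
  fixes a b :: "'a::real_inner"
  assumes "norm a = 1" "norm b = 1" "0 \<le> \<delta>" "\<delta> \<le> pi"
  shows "sphere_dist a b < \<delta> \<longleftrightarrow> cos \<delta> < inner a b"
proof -
  have "sphere_dist a b < \<delta> \<longleftrightarrow> arccos (inner a b) < arccos (cos \<delta>)"
    using assms(3,4) by (simp add: sphere_dist_def arccos_cos)
  also have "\<dots> \<longleftrightarrow> cos \<delta> < inner a b"
    using inner_unit_bounded[OF assms(1,2)] by (intro arccos_less_mono) auto
  finally show ?thesis .
qed

text \<open>Cauchy-Schwarz for the components of \<open>a\<close> and \<open>c\<close> orthogonal to \<open>b\<close>, whose norms are the
  sines of the two distances.\<close>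
lemma cos_add_sphere_dist_le_inner:
  fixes a b c :: "'a::real_inner"
  assumes a: "norm a = 1" and b: "norm b = 1" and c: "norm c = 1"
  shows "cos (sphere_dist a b + sphere_dist b c) \<le> inner a c"
proof -
  define x where "x = inner a b"
  define y where "y = inner b c"
  define p where "p = a - x *\<^sub>R b"
  define q where "q = c - y *\<^sub>R b"
  have aa: "inner a a = 1" and bb: "inner b b = 1" and cc: "inner c c = 1"
    using a b c by (simp_all add: dot_square_norm)
  have "inner p q = inner a c - x * y"
    unfolding p_def q_def
    by (simp add: inner_diff_left inner_diff_right bb x_def y_def inner_commute algebra_simps)
  moreover have "norm p = sqrt (1 - x\<^sup>2)"
    unfolding norm_eq_sqrt_inner p_def
    by (simp add: inner_diff_left inner_diff_right aa bb x_def inner_commute algebra_simps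
        power2_eq_square)
  moreover have "norm q = sqrt (1 - y\<^sup>2)"
    unfolding norm_eq_sqrt_inner q_def
    by (simp add: inner_diff_left inner_diff_right bb cc y_def inner_commute algebra_simps
        power2_eq_square)
  ultimately have "x * y - sqrt (1 - x\<^sup>2) * sqrt (1 - y\<^sup>2) \<le> inner a c"
    using Cauchy_Schwarz_ineq2[of p q] by (simp add: abs_le_iff)
  moreover have "cos (sphere_dist a b + sphere_dist b c) = x * y - sqrt (1 - x\<^sup>2) * sqrt (1 - y\<^sup>2)"
    using inner_unit_bounded[OF a b] inner_unit_bounded[OF b c]
    by (simp add: cos_add sphere_dist_def sin_arccos x_def y_def)
  ultimately show ?thesis by simp
qed

lemma sphere_dist_triangle:
  fixes a b c :: "'a::real_inner"
  assumes a: "norm a = 1" and b: "norm b = 1" and c: "norm c = 1"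
  shows "sphere_dist a c \<le> sphere_dist a b + sphere_dist b c"
proof (cases "sphere_dist a b + sphere_dist b c \<le> pi")
  case True
  have "arccos (inner a c) \<le> arccos (cos (sphere_dist a b + sphere_dist b c))"
    using cos_add_sphere_dist_le_inner[OF assms] inner_unit_bounded[OF a c]
    by (intro arccos_le_arccos) auto
  also have "\<dots> = sphere_dist a b + sphere_dist b c"
    using True sphere_dist_bounded[OF a b] sphere_dist_bounded[OF b c] by (simp add: arccos_cos)
  finally show ?thesis by (simp add: sphere_dist_def)
next
  case False
  then show ?thesis using sphere_dist_bounded[OF a c] by simp
qed

text \<open>The point at distance \<open>t\<close> from \<open>w\<close> on the great circle through \<open>w\<close> and \<open>u\<close>; the
  circle is spanned by \<open>w\<close> and the unit vector \<open>p\<close> orthogonal to \<open>w\<close> in the direction of \<open>u\<close>.\<close>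
lemma sphere_geodesic_point:
  fixes w u :: "'a::real_inner"
  assumes w: "norm w = 1" and u: "norm u = 1"
    and f: "0 < sphere_dist w u" "sphere_dist w u < pi"
    and t: "0 \<le> t" "t \<le> sphere_dist w u"
  obtains w' where "norm w' = 1" "sphere_dist w' w = t" "sphere_dist w' u = sphere_dist w u - t"
proof
  define f where "f = sphere_dist w u"
  have cf: "cos f = inner w u"
    using cos_sphere_dist[OF w u] by (simp add: f_def)
  have sf: "sin f > 0"
    using f by (simp add: sin_gt_zero f_def)
  define p where "p = (1 / sin f) *\<^sub>R (u - cos f *\<^sub>R w)"
  have ww: "inner w w = 1" and uu: "inner u u = 1"
    using w u by (simp_all add: dot_square_norm)
  have wp: "inner w p = 0" and pw: "inner p w = 0"
    unfolding p_def using cf ww by (simp_all add: inner_diff_right inner_diff_left inner_commute)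
  have up: "inner u p = sin f"
  proof -
    have "inner u p = (1 - (cos f)\<^sup>2) / sin f"
      unfolding p_def using cf uu by (simp add: inner_diff_right inner_commute power2_eq_square)
    also have "\<dots> = sin f"
      using sf sin_squared_eq[of f] by (simp add: power2_eq_square field_simps)
    finally show ?thesis .
  qed
  have pp: "inner p p = 1"
  proof -
    have "inner p p = (1 / sin f) * (inner p u - cos f * inner p w)"
      by (simp add: p_def inner_diff_right)
    then show ?thesis
      using up wp sf by (simp add: inner_commute)
  qed
  define w' where "w' = cos t *\<^sub>R w + sin t *\<^sub>R p"
  have "inner w' w' = (cos t)\<^sup>2 + (sin t)\<^sup>2"
    unfolding w'_def using wp pw ww pp
    by (simp add: inner_add_left inner_add_right power2_eq_square)
  then show "norm w' = 1"
    by (simp add: norm_eq_sqrt_inner)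
  have "inner w' w = cos t"
    unfolding w'_def using pw ww by (simp add: inner_add_left)
  then show "sphere_dist w' w = t"
    using t f by (simp add: sphere_dist_def arccos_cos)
  have "inner w' u = cos (f - t)"
    unfolding w'_def using up cf by (simp add: inner_add_left inner_commute[of p u] cos_diff)
  then show "sphere_dist w' u = sphere_dist w u - t"
    using t f by (simp add: sphere_dist_def arccos_cos f_def)
qed

text \<open>The new centre lies on the geodesic from \<open>w\<close> to \<open>p\<close>, at distance \<open>(d(w,p) - r)/2\<close>
  from \<open>w\<close>.\<close>
lemma sphere_cap_recentre:
  fixes w p :: "'a::real_inner"
  assumes w: "norm w = 1" and p: "norm p = 1" and X: "\<And>x. x \<in> X \<Longrightarrow> norm x = 1"
    and r: "0 \<le> r" "\<And>x. x \<in> X \<Longrightarrow> sphere_dist w x \<le> r"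
    and far: "sphere_dist w p < pi"
  obtains w' where "norm w' = 1"
    "\<And>x. x \<in> insert p X \<Longrightarrow> sphere_dist w' x \<le> max r ((r + sphere_dist w p) / 2)"
proof (cases "sphere_dist w p \<le> r")
  case True
  then show ?thesis
    using that[of w] w r by auto
next
  case False
  define t where "t = (sphere_dist w p - r) / 2"
  obtain w' where w': "norm w' = 1" "sphere_dist w' w = t" "sphere_dist w' p = sphere_dist w p - t"
    using sphere_geodesic_point[OF w p _ far, of t] False r(1) by (auto simp: t_def)
  have "sphere_dist w' x \<le> (r + sphere_dist w p) / 2" if "x \<in> insert p X" for x
    using that
  proof
    assume "x = p"
    then show ?thesis
      using w' by (simp add: t_def field_simps)
  next
    assume x: "x \<in> X"
    then have "sphere_dist w' x \<le> sphere_dist w' w + sphere_dist w x"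
      using w' w X by (intro sphere_dist_triangle) auto
    also have "\<dots> \<le> t + r"
      using r(2)[OF x] w' by simp
    finally show ?thesis
      by (simp add: t_def field_simps)
  qed
  then show ?thesis
    using that[of w'] w'(1) by (meson max.coboundedI2 order_trans)
qed

lemma sphere_cap_absorb_neighbour:
  fixes w p q :: "'a::real_inner"
  assumes w: "norm w = 1" and p: "norm p = 1" and X: "\<And>x. x \<in> X \<Longrightarrow> norm x = 1"
    and r: "0 \<le> r" "\<And>x. x \<in> X \<Longrightarrow> sphere_dist w x \<le> r"
    and q: "q \<in> X" "sphere_dist q p \<le> \<eta>" and small: "r + \<eta> < pi"
  obtains w' where "norm w' = 1" "\<And>x. x \<in> insert p X \<Longrightarrow> sphere_dist w' x \<le> r + \<eta> / 2"
proof -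
  have "sphere_dist w p \<le> sphere_dist w q + sphere_dist q p"
    using w p X q(1) by (intro sphere_dist_triangle) auto
  also have "\<dots> \<le> r + \<eta>"
    using r(2)[OF q(1)] q(2) by simp
  finally have near: "sphere_dist w p \<le> r + \<eta>" .
  have "0 \<le> \<eta>"
    using sphere_dist_bounded[OF X[OF q(1)] p] q(2) by linarith
  then have "max r ((r + sphere_dist w p) / 2) \<le> r + \<eta> / 2"
    using near by simp
  moreover have "sphere_dist w p < pi"
    using near small by linarith
  then obtain w' where w': "norm w' = 1"
    and cap': "\<And>x. x \<in> insert p X \<Longrightarrow> sphere_dist w' x \<le> max r ((r + sphere_dist w p) / 2)"
    using sphere_cap_recentre[OF w p X r] by blast
  ultimately show thesis
    using that[OF w'] cap' by (meson order_trans)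
qed

lemma finite_gap_below:
  fixes A :: "real set"
  assumes "finite A" "0 < \<delta>"
  obtains \<eta> where "0 \<le> \<eta>" "\<eta> < \<delta>" "\<And>x. x \<in> A \<Longrightarrow> x < \<delta> \<Longrightarrow> x \<le> \<eta>"
proof
  let ?\<eta> = "Max (insert 0 {x \<in> A. x < \<delta>})"
  show "0 \<le> ?\<eta>" "?\<eta> < \<delta>"
    using assms by simp_all
  show "x \<le> ?\<eta>" if "x \<in> A" "x < \<delta>" for x
    using assms that by simp
qed

lemma connected_sphere_cap_grow:
  fixes u :: "'i \<Rightarrow> 'a::real_inner"
  assumes u: "\<And>i. i \<in> I \<Longrightarrow> norm (u i) = 1"
    and connected: "\<And>S. S \<subseteq> I \<Longrightarrow> S \<noteq> {} \<Longrightarrow> S \<noteq> I \<Longrightarrow>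
      \<exists>i\<in>S. \<exists>j\<in>I - S. sphere_dist (u i) (u j) \<le> \<eta>"
    and S: "S \<subseteq> I" "S \<noteq> {}" "S \<noteq> I"
    and w: "norm w = 1" and r: "0 \<le> r" "\<And>i. i \<in> S \<Longrightarrow> sphere_dist w (u i) \<le> r"
    and small: "r + \<eta> < pi"
  obtains j w' where "j \<in> I - S" "norm w' = 1"
    "\<And>i. i \<in> insert j S \<Longrightarrow> sphere_dist w' (u i) \<le> r + \<eta> / 2"
proof -
  obtain i j where ij: "i \<in> S" "j \<in> I - S" "sphere_dist (u i) (u j) \<le> \<eta>"
    using connected[OF S] by blast
  have unit: "norm (u j) = 1" "\<And>x. x \<in> u ` S \<Longrightarrow> norm x = 1"
    using ij S u by auto
  have cap: "\<And>x. x \<in> u ` S \<Longrightarrow> sphere_dist w x \<le> r"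
    using r(2) by auto
  obtain w' where w': "norm w' = 1"
    and cap': "\<And>x. x \<in> insert (u j) (u ` S) \<Longrightarrow> sphere_dist w' x \<le> r + \<eta> / 2"
    using sphere_cap_absorb_neighbour[OF w unit r(1) cap imageI[of i S u, OF ij(1)] ij(3) small]
    by blast
  have "\<And>x. x \<in> insert j S \<Longrightarrow> sphere_dist w' (u x) \<le> r + \<eta> / 2"
    using cap' by (metis image_eqI insert_iff)
  with ij(2) w' show thesis
    by (rule that)
qed

lemma connected_unit_vectors_in_cap:
  fixes u :: "'i \<Rightarrow> 'a::real_inner"
  assumes I: "finite I" "I \<noteq> {}" and u: "\<And>i. i \<in> I \<Longrightarrow> norm (u i) = 1"
    and \<eta>: "0 \<le> \<eta>" "(real (card I) - 1) * \<eta> < pi"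
    and connected: "\<And>S. S \<subseteq> I \<Longrightarrow> S \<noteq> {} \<Longrightarrow> S \<noteq> I \<Longrightarrow>
      \<exists>i\<in>S. \<exists>j\<in>I - S. sphere_dist (u i) (u j) \<le> \<eta>"
  obtains w where "norm w = 1" "\<And>i. i \<in> I \<Longrightarrow> sphere_dist w (u i) \<le> (real (card I) - 1) * \<eta> / 2"
proof -
  have "\<exists>S w. S \<subseteq> I \<and> card S = m \<and> norm w = 1 \<and>
      (\<forall>i\<in>S. sphere_dist w (u i) \<le> (real m - 1) * \<eta> / 2)"
    if "1 \<le> m" "m \<le> card I" for m
    using that
  proof (induction m rule: nat_induct_at_least)
    case base
    obtain i where "i \<in> I"
      using I by blast
    then show ?case
      using u[of i] sphere_dist_self[of "u i"] by (intro exI[of _ "{i}"] exI[of _ "u i"]) auto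
  next
    case (Suc m)
    then obtain S w where S: "S \<subseteq> I" "card S = m" and w: "norm w = 1"
      and cap: "\<And>i. i \<in> S \<Longrightarrow> sphere_dist w (u i) \<le> (real m - 1) * \<eta> / 2"
      by auto
    have proper: "S \<noteq> {}" "S \<noteq> I"
      using S Suc.hyps Suc.prems by auto
    have "(real m + 1) / 2 \<le> real (card I) - 1"
      using Suc.hyps Suc.prems by (simp add: field_simps)
    then have "(real m + 1) / 2 * \<eta> \<le> (real (card I) - 1) * \<eta>"
      using \<eta>(1) by (rule mult_right_mono)
    moreover have "(real m - 1) * \<eta> / 2 + \<eta> = (real m + 1) / 2 * \<eta>"
      by (simp add: field_simps)
    ultimately have small: "(real m - 1) * \<eta> / 2 + \<eta> < pi"
      using \<eta>(2) by linarith
    have r: "0 \<le> (real m - 1) * \<eta> / 2"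
      using Suc.hyps \<eta>(1) by simp
    obtain j w' where j: "j \<in> I - S" and w': "norm w' = 1"
      and cap': "\<And>i. i \<in> insert j S \<Longrightarrow> sphere_dist w' (u i) \<le> (real m - 1) * \<eta> / 2 + \<eta> / 2"
      using connected_sphere_cap_grow[OF u connected S(1) proper w r cap small] by blast
    have radius: "(real m - 1) * \<eta> / 2 + \<eta> / 2 = (real (Suc m) - 1) * \<eta> / 2"
      by (simp add: field_simps)
    have "card (insert j S) = Suc m"
      using S j I(1) finite_subset by fastforce
    then show ?case
      using S(1) j w' cap'[unfolded radius] by (intro exI[of _ "insert j S"] exI[of _ w']) auto
  qed
  from this[of "card I"] obtain S w where "S \<subseteq> I" "card S = card I" "norm w = 1"
    "\<forall>i\<in>S. sphere_dist w (u i) \<le> (real (card I) - 1) * \<eta> / 2"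
    using I by (auto simp: Suc_le_eq card_gt_0_iff)
  moreover have "S = I"
    using calculation(1,2) I(1) by (simp add: card_subset_eq)
  ultimately show thesis
    using that by blast
qed

lemma connected_unit_vectors_in_open_hemisphere:
  fixes u :: "'i \<Rightarrow> 'a::real_inner"
  assumes I: "finite I" "I \<noteq> {}" and u: "\<And>i. i \<in> I \<Longrightarrow> norm (u i) = 1"
    and \<delta>: "0 < \<delta>" "(real (card I) - 1) * \<delta> \<le> pi"
    and connected: "\<And>S. S \<subseteq> I \<Longrightarrow> S \<noteq> {} \<Longrightarrow> S \<noteq> I \<Longrightarrow>
      \<exists>i\<in>S. \<exists>j\<in>I - S. sphere_dist (u i) (u j) < \<delta>"
  obtains w where "norm w = 1" "\<And>i. i \<in> I \<Longrightarrow> 0 < inner w (u i)"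
proof -
  obtain \<eta> where \<eta>: "0 \<le> \<eta>" "\<eta> < \<delta>"
    and gap: "\<And>x. x \<in> (\<lambda>(i, j). sphere_dist (u i) (u j)) ` (I \<times> I) \<Longrightarrow> x < \<delta> \<Longrightarrow> x \<le> \<eta>"
    using finite_gap_below[of "(\<lambda>(i, j). sphere_dist (u i) (u j)) ` (I \<times> I)" \<delta>] I(1) \<delta>(1) by blast
  have cross: "\<exists>i\<in>S. \<exists>j\<in>I - S. sphere_dist (u i) (u j) \<le> \<eta>"
    if "S \<subseteq> I" "S \<noteq> {}" "S \<noteq> I" for S
    using connected[OF that] gap that(1) by blast
  have small: "(real (card I) - 1) * \<eta> < pi"
  proof (cases "card I = 1")
    case False
    then have "1 < real (card I)"
      using I by (cases "card I") auto
    then have "(real (card I) - 1) * \<eta> < (real (card I) - 1) * \<delta>"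
      using \<eta>(2) by simp
    then show ?thesis
      using \<delta>(2) by linarith
  qed simp
  obtain w where w: "norm w = 1"
    and cap: "\<And>i. i \<in> I \<Longrightarrow> sphere_dist w (u i) \<le> (real (card I) - 1) * \<eta> / 2"
    using connected_unit_vectors_in_cap[OF I u \<eta>(1) small cross] by blast
  have "0 < inner w (u i)" if "i \<in> I" for i
  proof -
    have "sphere_dist w (u i) < pi / 2"
      using cap[OF that] small by linarith
    then show ?thesis
      using sphere_dist_less_iff[OF w u[OF that], of "pi / 2"] by simp
  qed
  with w that show thesis
    by blast
qed

lemma sum_scaleR_neq_zero_if_inner_pos:
  fixes v :: "'i \<Rightarrow> 'a::real_inner"
  assumes "finite I" "I \<noteq> {}" "\<And>i. i \<in> I \<Longrightarrow> 0 < \<gamma> i" "\<And>i. i \<in> I \<Longrightarrow> 0 < inner w (v i)"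
  shows "(\<Sum>i\<in>I. \<gamma> i *\<^sub>R v i) \<noteq> 0"
proof -
  have "0 < (\<Sum>i\<in>I. \<gamma> i * inner w (v i))"
    using assms by (intro sum_pos) auto
  also have "\<dots> = inner w (\<Sum>i\<in>I. \<gamma> i *\<^sub>R v i)"
    by (simp add: inner_sum_right)
  finally show ?thesis
    by auto
qed

lemma cos_sim_eq_inner_sgn: "cos_sim a b = inner (sgn a) (sgn b)"
  by (simp add: cos_sim_def sgn_div_norm divide_inverse)

lemma sphere_dist_sgn_less_iff:
  fixes a b :: "'a::real_inner"
  assumes "a \<noteq> 0" "b \<noteq> 0" "0 \<le> \<delta>" "\<delta> \<le> pi"
  shows "sphere_dist (sgn a) (sgn b) < \<delta> \<longleftrightarrow> cos \<delta> < cos_sim a b"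
  using sphere_dist_less_iff[of "sgn a" "sgn b" \<delta>] assms by (simp add: norm_sgn cos_sim_eq_inner_sgn)

lemma cross_pair_if_no_separating_cut:
  fixes v :: "'i \<Rightarrow> 'a::real_inner"
  assumes "finite I"
    and no_cut: "\<not> (\<exists>c1 c2. c1 \<union> c2 = I \<and> c1 \<inter> c2 = {} \<and> c1 \<noteq> {} \<and> c2 \<noteq> {} \<and>
      (MAX (i, j) \<in> c1 \<times> c2. cos_sim (v i) (v j)) \<le> c)"
    and S: "S \<subseteq> I" "S \<noteq> {}" "S \<noteq> I"
  obtains i j where "i \<in> S" "j \<in> I - S" "c < cos_sim (v i) (v j)"
proof -
  have "\<not> (MAX (i, j) \<in> S \<times> (I - S). cos_sim (v i) (v j)) \<le> c"
  proof
    assume "(MAX (i, j) \<in> S \<times> (I - S). cos_sim (v i) (v j)) \<le> c"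
    with S have "\<exists>c1 c2. c1 \<union> c2 = I \<and> c1 \<inter> c2 = {} \<and> c1 \<noteq> {} \<and> c2 \<noteq> {} \<and>
        (MAX (i, j) \<in> c1 \<times> c2. cos_sim (v i) (v j)) \<le> c"
      by (intro exI[of _ S] exI[of _ "I - S"]) auto
    with no_cut show False ..
  qed
  moreover have "finite (S \<times> (I - S))" "S \<times> (I - S) \<noteq> {}"
    using S finite_subset[OF S(1) assms(1)] assms(1) by auto
  ultimately have "\<exists>(i, j) \<in> S \<times> (I - S). c < cos_sim (v i) (v j)"
    by (simp add: Max_gr_iff not_le)
  with that show thesis
    by blast
qed

theorem lemma3:
  fixes k :: nat and v :: "nat \<Rightarrow> real ^ 'd" and \<gamma> :: "nat \<Rightarrow> real"
  assumes "k \<ge> 2" and "CARD('d) \<ge> 2"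
    and "\<And>i. i \<in> {1..k} \<Longrightarrow> v i \<noteq> 0"
    and "\<And>i. i \<in> {1..k} \<Longrightarrow> \<gamma> i > 0"
    and "(\<Sum>i=1..k. \<gamma> i *\<^sub>R v i) = 0"
  shows "\<exists>c1 c2. c1 \<union> c2 = {1..k} \<and> c1 \<inter> c2 = {} \<and> c1 \<noteq> {} \<and> c2 \<noteq> {} \<and>
           (MAX (i, j) \<in> c1 \<times> c2. cos_sim (v i) (v j)) \<le> cos (pi / (real k - 1))"
proof (rule ccontr)
  assume no_cut: "\<not> ?thesis"
  define \<delta> where "\<delta> = pi / (real k - 1)"
  have \<delta>: "0 < \<delta>" "\<delta> \<le> pi" "(real (card {1..k}) - 1) * \<delta> \<le> pi"
    using assms(1) by (simp_all add: \<delta>_def field_simps)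
  have cross: "\<exists>i\<in>S. \<exists>j\<in>{1..k} - S. sphere_dist (sgn (v i)) (sgn (v j)) < \<delta>"
    if S: "S \<subseteq> {1..k}" "S \<noteq> {}" "S \<noteq> {1..k}" for S
  proof -
    obtain i j where ij: "i \<in> S" "j \<in> {1..k} - S" "cos \<delta> < cos_sim (v i) (v j)"
      using cross_pair_if_no_separating_cut[OF finite_atLeastAtMost no_cut S] unfolding \<delta>_def .
    then have "sphere_dist (sgn (v i)) (sgn (v j)) < \<delta>"
      using S(1) assms(3) \<delta>(1,2) by (subst sphere_dist_sgn_less_iff) auto
    with ij show ?thesis
      by blast
  qed
  have unit: "norm (sgn (v i)) = 1" if "i \<in> {1..k}" for i
    using assms(3)[OF that] by (simp add: norm_sgn)
  have "{1..k} \<noteq> {}"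
    using assms(1) by simp
  then obtain w where "\<And>i. i \<in> {1..k} \<Longrightarrow> 0 < inner w (sgn (v i))"
    using connected_unit_vectors_in_open_hemisphere[OF finite_atLeastAtMost _ unit \<delta>(1,3) cross]
    by blast
  then have "\<And>i. i \<in> {1..k} \<Longrightarrow> 0 < inner w (v i)"
    using assms(3) by (simp add: sgn_div_norm zero_less_mult_iff)
  then show False
    using sum_scaleR_neq_zero_if_inner_pos[of "{1..k}" \<gamma> w v] assms(1,4,5) by auto
qed

end
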